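(* For all $x\in\mathbb{R}$, $\Lambda^*_\nu(x)\ge\big(\sqrt{1+|x|}-1\big)^2$.
   Context: $\nu$ is the symmetric exponential distribution on $\mathbb{R}$ with density $\frac12e^{-|x|}$, and $\Lambda^*_\nu(x)=\sup_y\{xy-\ln\int e^{yz}d\nu(z)\}$ is its Cramer transform; explicitly $\Lambda^*_\nu(x)=\sqrt{x^2+1}-1-\ln\frac{\sqrt{x^2+1}+1}{2}$. *)

theory Defs
  imports "HOL-Analysis.Analysis"
begin

definition nu :: "real measure" where
  "nu = density lborel (\<lambda>z. ennreal (exp (- \<bar>z\<bar>) / 2))"

definition mgf_nu :: "real \<Rightarrow> ennreal" where
  "mgf_nu y = (\<integral>\<^sup>+ z. ennreal (exp (y * z)) \<partial>nu)"

text \<open>Cramer transform sup_y (x y - ln mgf(y)); values y with infinite mgf contribute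
  minus infinity and are therefore omitted from the supremum.\<close>
definition cramer_nu :: "real \<Rightarrow> ereal" where
  "cramer_nu x = (SUP y \<in> {y. mgf_nu y < \<infinity>}. ereal (x * y - ln (enn2real (mgf_nu y))))"

end

theory Submission
  imports Defs
begin

text \<open>For \<open>|y| < 1\<close> the moment generating function of \<open>\<nu>\<close> is \<open>1/(1 - y\<^sup>2)\<close>, so every such \<open>y\<close>
  gives \<open>\<Lambda>\<^sup>*(x) \<ge> x y + ln (1 - y\<^sup>2)\<close>. Taking \<open>y = sgn x (1 - 1/s)\<close> with \<open>s = sqrt (1 + |x|)\<close>
  and bounding the logarithm by \<open>ln t \<ge> 1 - 1/t\<close> yields \<open>(s - 1)\<^sup>2\<close>.\<close>

lemma nn_integral_exp_neg_atLeast_0: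
  fixes a :: real
  assumes "a > 0"
  shows "(\<integral>\<^sup>+ z. ennreal (indicator {0..} z * exp (- a * z)) \<partial>lborel) = ennreal (1 / a)"
proof -
  have "((\<lambda>z. exp (- a * z)) has_integral exp (- a * 0) / a) {0..}"
    by (rule has_integral_exp_minus_to_infinity[OF assms])
  then have "(\<integral>\<^sup>+ z. ennreal (indicator {0..} z * exp (- a * z)) \<partial>lborel) = ennreal (exp (- a * 0) / a)"
    by (intro nn_integral_has_integral_lebesgue) auto
  then show ?thesis by simp
qed

lemma nn_integral_exp_atMost_0:
  fixes a :: real
  assumes "a > 0"
  shows "(\<integral>\<^sup>+ z. ennreal (indicator {..0} z * exp (a * z)) \<partial>lborel) = ennreal (1 / a)"
proof -
  have "(\<integral>\<^sup>+ z. ennreal (indicator {..0} z * exp (a * z)) \<partial>lborel)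
      = ennreal \<bar>-1\<bar> * (\<integral>\<^sup>+ z. ennreal (indicator {..0} (0 + -1 * z) * exp (a * (0 + -1 * z))) \<partial>lborel)"
    by (rule nn_integral_real_affine) auto
  also have "(\<lambda>z. ennreal (indicator {..0} (0 + -1 * z) * exp (a * (0 + -1 * z))))
      = (\<lambda>z. ennreal (indicator {0..} z * exp (- a * z)))"
    by (auto simp: indicator_def fun_eq_iff)
  finally show ?thesis
    using nn_integral_exp_neg_atLeast_0[OF assms] by simp
qed

lemma mgf_nu_eq:
  fixes y :: real
  assumes "\<bar>y\<bar> < 1"
  shows "mgf_nu y = ennreal (1 / (1 - y\<^sup>2))"
proof -
  define f where "f z = indicator {0..} z * exp (- (1 - y) * z)" for z :: real
  define g where "g z = indicator {..0} z * exp ((1 + y) * z)" for z :: real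
  have fg_nonneg: "f z \<ge> 0" "g z \<ge> 0" for z
    by (simp_all add: f_def g_def)
  have split: "exp (- \<bar>z\<bar>) / 2 * exp (y * z) = f z / 2 + g z / 2" if "z \<noteq> 0" for z
    using that by (cases "z > 0") (simp_all add: f_def g_def mult_exp_exp algebra_simps)
  have "mgf_nu y = (\<integral>\<^sup>+ z. ennreal (exp (- \<bar>z\<bar>) / 2 * exp (y * z)) \<partial>lborel)"
    unfolding mgf_nu_def nu_def
    by (subst nn_integral_density) (auto intro!: nn_integral_cong simp: ennreal_mult[symmetric])
  also have "\<dots> = (\<integral>\<^sup>+ z. ennreal (f z / 2) + ennreal (g z / 2) \<partial>lborel)"
    by (intro nn_integral_cong_AE eventually_mono[OF AE_lborel_singleton[of 0]])
      (subst split, simp_all add: ennreal_plus fg_nonneg)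
  also have "\<dots> = (\<integral>\<^sup>+ z. ennreal (f z) \<partial>lborel) / 2 + (\<integral>\<^sup>+ z. ennreal (g z) \<partial>lborel) / 2"
    by (subst nn_integral_add) (auto simp: f_def g_def divide_ennreal[symmetric] nn_integral_divide)
  also have "\<dots> = ennreal (1 / (1 - y)) / 2 + ennreal (1 / (1 + y)) / 2"
    using assms unfolding f_def g_def
    by (subst nn_integral_exp_neg_atLeast_0 nn_integral_exp_atMost_0, simp)+ simp
  also have "\<dots> = ennreal (1 / (1 - y) / 2 + 1 / (1 + y) / 2)"
    using assms by (simp add: divide_ennreal[of _ 2, simplified] ennreal_plus)
  also have "1 / (1 - y) / 2 + 1 / (1 + y) / 2 = 1 / (1 - y\<^sup>2)"
    using assms abs_square_less_1[of y]
    by (simp add: abs_less_iff divide_simps power2_eq_square) (simp add: algebra_simps)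
  finally show ?thesis .
qed

lemma cramer_nu_ge:
  fixes x y :: real
  assumes "\<bar>y\<bar> < 1"
  shows "ereal (x * y + ln (1 - y\<^sup>2)) \<le> cramer_nu x"
proof -
  have pos: "1 - y\<^sup>2 > 0"
    using assms by (simp add: abs_square_less_1)
  have "mgf_nu y < \<infinity>" "ln (enn2real (mgf_nu y)) = - ln (1 - y\<^sup>2)"
    using pos by (simp_all add: mgf_nu_eq[OF assms] ln_div)
  then show ?thesis
    unfolding cramer_nu_def by (intro SUP_upper2[of y]) auto
qed

lemma ln_ge_one_minus_inverse:
  fixes t :: real
  assumes "t > 0"
  shows "1 - 1 / t \<le> ln t"
  using ln_le_minus_one[of "1 / t"] assms by (simp add: ln_div)

lemma square_minus_one_le_laplace_rate:
  fixes s :: real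
  assumes "s \<ge> 1"
  shows "(s - 1)\<^sup>2 \<le> (s\<^sup>2 - 1) * (1 - 1 / s) + ln (1 - (1 - 1 / s)\<^sup>2)"
proof -
  have "1 - (1 - 1 / s)\<^sup>2 = (2 * s - 1) / s\<^sup>2"
    using assms by (simp add: field_simps power2_eq_square)
  then have "- ((s - 1)\<^sup>2 / (2 * s - 1)) \<le> ln (1 - (1 - 1 / s)\<^sup>2)"
    using ln_ge_one_minus_inverse[of "(2 * s - 1) / s\<^sup>2"] assms
    by (simp add: field_simps power2_eq_square)
  moreover have "(s - 1)\<^sup>2 / (2 * s - 1) \<le> (s - 1)\<^sup>2 / s"
    using assms by (intro divide_left_mono) auto
  moreover have "(s\<^sup>2 - 1) * (1 - 1 / s) = (s - 1)\<^sup>2 + (s - 1)\<^sup>2 / s"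
    using assms by (simp add: field_simps power2_eq_square)
  ultimately show ?thesis
    by linarith
qed

theorem lemma8:
  fixes x :: real
  shows "ereal ((sqrt (1 + \<bar>x\<bar>) - 1) ^ 2) \<le> cramer_nu x"
proof -
  define s where "s = sqrt (1 + \<bar>x\<bar>)"
  define y where "y = (if x \<ge> 0 then 1 - 1 / s else 1 / s - 1)"
  have s: "s \<ge> 1" "\<bar>x\<bar> = s\<^sup>2 - 1"
    unfolding s_def by simp_all
  have "\<bar>y\<bar> < 1" "x * y = \<bar>x\<bar> * (1 - 1 / s)" "y\<^sup>2 = (1 - 1 / s)\<^sup>2"
    using s(1) unfolding y_def
    by (auto simp: power2_eq_square algebra_simps)
  then have "ereal (\<bar>x\<bar> * (1 - 1 / s) + ln (1 - (1 - 1 / s)\<^sup>2)) \<le> cramer_nu x"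
    using cramer_nu_ge[of y x] by simp
  moreover have "(s - 1)\<^sup>2 \<le> \<bar>x\<bar> * (1 - 1 / s) + ln (1 - (1 - 1 / s)\<^sup>2)"
    using square_minus_one_le_laplace_rate[OF s(1)] s(2) by simp
  ultimately show ?thesis
    unfolding s_def by (meson ereal_less_eq(3) order_trans)
qed

end
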